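(* Let $X$ be a real normed linear space, $x\in X\setminus\{\theta\}$ and $\varepsilon\in[0,2)$. Then the following are equivalent: (i) $x$ is $\varepsilon$-smooth, i.e. $\operatorname{diam} J(x)\le\varepsilon$; (ii) $\sup_{y\in S_X}\{\rho'_+(x,y)-\rho'_-(x,y)\}\le\varepsilon\|x\|$.
   Context: $S_X$ is the unit sphere of $X$, $X^*$ the dual space, $S_{X^*}$ its unit sphere. For $x\neq\theta$, $J(x)=\{f\in S_{X^*}: f(x)=\|x\|\}$ is the set of supporting functionals at $x$, and $\operatorname{diam}A=\sup_{f,g\in A}\|f-g\|$. The norm derivatives are $\rho'_{+}(x,y)=\lim_{\lambda\to0^+}\frac{\|x+\lambda y\|^2-\|x\|^2}{2\lambda}$ and $\rho'_{-}(x,y)=\lim_{\lambda\to0^-}\frac{\|x+\lambda y\|^2-\|x\|^2}{2\lambda}$. *)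

theory Defs
  imports "HOL-Analysis.Analysis"
begin

text \<open>Dual space X^* is rendered as bounded linear functionals to real (blinfun)
  with the operator norm.  J(x): supporting functionals at x.\<close>
definition supp_funcs :: "'a::real_normed_vector \<Rightarrow> ('a \<Rightarrow>\<^sub>L real) set" where
  "supp_funcs x = {f. norm f = 1 \<and> blinfun_apply f x = norm x}"

definition rho_plus :: "'a::real_normed_vector \<Rightarrow> 'a \<Rightarrow> real" where
  "rho_plus x y = Lim (at_right 0) (\<lambda>t::real. (norm (x + t *\<^sub>R y) ^ 2 - norm x ^ 2) / (2 * t))"

definition rho_minus :: "'a::real_normed_vector \<Rightarrow> 'a \<Rightarrow> real" where
  "rho_minus x y = Lim (at_left 0) (\<lambda>t::real. (norm (x + t *\<^sub>R y) ^ 2 - norm x ^ 2) / (2 * t))"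

definition eps_smooth :: "real \<Rightarrow> 'a::real_normed_vector \<Rightarrow> bool" where
  "eps_smooth \<epsilon> x \<longleftrightarrow> diameter (supp_funcs x) \<le> \<epsilon>"

end

theory Submission
  imports Defs
begin

text \<open>Both norm derivatives are governed by the right derivative
  \<open>d(x;y) = lim (t \<rightarrow> 0+) (\<parallel>x + t y\<parallel> - \<parallel>x\<parallel>) / t\<close>, which is sublinear in \<open>y\<close>:
  \<open>\<rho>'\<^sub>+(x,y) = \<parallel>x\<parallel> d(x;y)\<close> and \<open>\<rho>'\<^sub>-(x,y) = -\<parallel>x\<parallel> d(x;-y)\<close>.  The supporting
  functionals at \<open>x\<close> are exactly the linear functionals below \<open>d(x;\<cdot>)\<close>, and by
  Hahn-Banach \<open>d(x;y) = max {f y | f \<in> J(x)}\<close>.  Hence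
  \<open>diam J(x) = sup {d(x;y) + d(x;-y) | \<parallel>y\<parallel> = 1}\<close>, which is the claim after scaling by \<open>\<parallel>x\<parallel>\<close>.
  The Hahn-Banach step is proved via Zorn's lemma: a minimal sublinear functional is linear.\<close>

definition sublinear :: "('a::real_vector \<Rightarrow> real) \<Rightarrow> bool" where
  "sublinear p \<longleftrightarrow> (\<forall>a b. p (a + b) \<le> p a + p b) \<and> (\<forall>c a. 0 \<le> c \<longrightarrow> p (c *\<^sub>R a) = c * p a)"

lemma sublinear_add: "sublinear p \<Longrightarrow> p (a + b) \<le> p a + p b"
  unfolding sublinear_def by blast

lemma sublinear_scaleR: "sublinear p \<Longrightarrow> 0 \<le> c \<Longrightarrow> p (c *\<^sub>R a) = c * p a"
  unfolding sublinear_def by blast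

lemma sublinear_zero: "sublinear p \<Longrightarrow> p 0 = 0"
  using sublinear_scaleR[of p 0 0] by simp

lemma sublinear_uminus_ge: "sublinear p \<Longrightarrow> - p (- a) \<le> p a"
  using sublinear_add[of p a "- a"] sublinear_zero[of p] by simp

lemma sublinearI:
  fixes p :: "'a::real_vector \<Rightarrow> real"
  assumes add: "\<And>a b. p (a + b) \<le> p a + p b"
    and scale: "\<And>c a. 0 < c \<Longrightarrow> p (c *\<^sub>R a) \<le> c * p a"
  shows "sublinear p"
  unfolding sublinear_def
proof (intro conjI allI impI add)
  fix c :: real and a :: 'a
  assume "0 \<le> c"
  have "p 0 = 0"
    using scale[of "1/2" 0] scale[of 2 0] by simp
  moreover have "c * p a \<le> p (c *\<^sub>R a)" if "0 < c"
  proof -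
    have "p a = p (inverse c *\<^sub>R (c *\<^sub>R a))"
      using that by simp
    also have "\<dots> \<le> inverse c * p (c *\<^sub>R a)"
      using that by (intro scale) simp
    finally show ?thesis
      using that by (simp add: field_simps)
  qed
  ultimately show "p (c *\<^sub>R a) = c * p a"
    using \<open>0 \<le> c\<close> scale[of c a] by (cases "c = 0") auto
qed

lemma le_INF_add:
  fixes f g :: "'b \<Rightarrow> real"
  assumes "S \<noteq> {}" "T \<noteq> {}" "\<And>s t. s \<in> S \<Longrightarrow> t \<in> T \<Longrightarrow> c \<le> f s + g t"
  shows "c \<le> (INF s\<in>S. f s) + (INF t\<in>T. g t)"
proof -
  have "c - g t \<le> (INF s\<in>S. f s)" if "t \<in> T" for t
    using assms that by (intro cINF_greatest) (auto simp: algebra_simps)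
  then have "c - (INF s\<in>S. f s) \<le> (INF t\<in>T. g t)"
    using assms by (intro cINF_greatest) (auto simp: algebra_simps)
  then show ?thesis
    by simp
qed

definition sublinear_shift :: "('a::real_vector \<Rightarrow> real) \<Rightarrow> 'a \<Rightarrow> 'a \<Rightarrow> real" where
  "sublinear_shift p a z = (INF s\<in>{0..}. p (z + s *\<^sub>R a) - s * p a)"

lemma sublinear_shift_le:
  assumes p: "sublinear p" and s: "0 \<le> s"
  shows "sublinear_shift p a z \<le> p (z + s *\<^sub>R a) - s * p a"
  unfolding sublinear_shift_def
proof (rule cINF_lower)
  show "bdd_below ((\<lambda>s. p (z + s *\<^sub>R a) - s * p a) ` {0..})"
  proof (rule bdd_belowI2)
    fix s :: real
    assume "s \<in> {0..}"
    then have "s * p a \<le> p (z + s *\<^sub>R a) + p (- z)"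
      using sublinear_add[OF p, of "z + s *\<^sub>R a" "- z"] sublinear_scaleR[OF p, of s a] by simp
    then show "- p (- z) \<le> p (z + s *\<^sub>R a) - s * p a"
      by simp
  qed
qed (use s in simp)

lemma sublinear_shift_le_self: "sublinear p \<Longrightarrow> sublinear_shift p a z \<le> p z"
  using sublinear_shift_le[of p 0 a z] by simp

lemma sublinear_shift_uminus: "sublinear p \<Longrightarrow> sublinear_shift p a (- a) \<le> - p a"
  using sublinear_shift_le[of p 1 a "- a"] sublinear_zero[of p] by simp

lemma sublinear_sublinear_shift:
  assumes p: "sublinear p"
  shows "sublinear (sublinear_shift p a)"
proof (rule sublinearI)
  fix z w
  show "sublinear_shift p a (z + w) \<le> sublinear_shift p a z + sublinear_shift p a w"
    unfolding sublinear_shift_def[of p a z] sublinear_shift_def[of p a w]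
  proof (rule le_INF_add)
    fix s t :: real
    assume "s \<in> {0..}" "t \<in> {0..}"
    then have "sublinear_shift p a (z + w) \<le> p ((z + s *\<^sub>R a) + (w + t *\<^sub>R a)) - (s + t) * p a"
      using sublinear_shift_le[OF p, of "s + t" a "z + w"] by (simp add: algebra_simps)
    also have "\<dots> \<le> (p (z + s *\<^sub>R a) - s * p a) + (p (w + t *\<^sub>R a) - t * p a)"
      using sublinear_add[OF p, of "z + s *\<^sub>R a" "w + t *\<^sub>R a"] by (simp add: algebra_simps)
    finally show "sublinear_shift p a (z + w) \<le> (p (z + s *\<^sub>R a) - s * p a) + (p (w + t *\<^sub>R a) - t * p a)" .
  qed auto
next
  fix c :: real and z
  assume c: "0 < c"
  have "sublinear_shift p a (c *\<^sub>R z) / c \<le> sublinear_shift p a z"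
    unfolding sublinear_shift_def[of p a z]
  proof (rule cINF_greatest)
    fix s :: real
    assume "s \<in> {0..}"
    then have "sublinear_shift p a (c *\<^sub>R z) \<le> p (c *\<^sub>R (z + s *\<^sub>R a)) - (c * s) * p a"
      using sublinear_shift_le[OF p, of "c * s" a "c *\<^sub>R z"] c by (simp add: algebra_simps)
    also have "\<dots> = c * (p (z + s *\<^sub>R a) - s * p a)"
      using sublinear_scaleR[OF p, of c "z + s *\<^sub>R a"] c by (simp add: algebra_simps)
    finally show "sublinear_shift p a (c *\<^sub>R z) / c \<le> p (z + s *\<^sub>R a) - s * p a"
      using c by (simp add: field_simps)
  qed simp
  then show "sublinear_shift p a (c *\<^sub>R z) \<le> c * sublinear_shift p a z"
    using c by (simp add: field_simps)
qed

lemma sublinear_INF_chain: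
  fixes C :: "('a::real_vector \<Rightarrow> real) set"
  assumes "C \<noteq> {}" and sub: "\<And>r. r \<in> C \<Longrightarrow> sublinear r"
    and chain: "\<And>r r'. r \<in> C \<Longrightarrow> r' \<in> C \<Longrightarrow> r \<le> r' \<or> r' \<le> r"
    and bdd: "\<And>z. bdd_below ((\<lambda>r. r z) ` C)"
  shows "sublinear (\<lambda>z. INF r\<in>C. r z)"
proof -
  have INF_le: "(INF r\<in>C. r z) \<le> r z" if "r \<in> C" for r z
    using bdd that by (rule cINF_lower)
  show ?thesis
  proof (rule sublinearI)
    fix a b
    show "(INF r\<in>C. r (a + b)) \<le> (INF r\<in>C. r a) + (INF r\<in>C. r b)"
    proof (rule le_INF_add)
      fix r r'
      assume rC: "r \<in> C" "r' \<in> C"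
      define m where "m = (if r \<le> r' then r else r')"
      have "m \<in> C" "m \<le> r" "m \<le> r'"
        using rC chain[OF rC] unfolding m_def by auto
      then have "(INF r\<in>C. r (a + b)) \<le> m a + m b"
        using INF_le sublinear_add[OF sub] by (meson order_trans)
      also have "\<dots> \<le> r a + r' b"
        using \<open>m \<le> r\<close> \<open>m \<le> r'\<close> by (simp add: add_mono le_funD)
      finally show "(INF r\<in>C. r (a + b)) \<le> r a + r' b" .
    qed (use \<open>C \<noteq> {}\<close> in auto)
  next
    fix c :: real and a
    assume c: "0 < c"
    have "(INF r\<in>C. r (c *\<^sub>R a)) / c \<le> (INF r\<in>C. r a)"
    proof (rule cINF_greatest)
      fix r
      assume "r \<in> C"
      then show "(INF r\<in>C. r (c *\<^sub>R a)) / c \<le> r a"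
        using INF_le[of r "c *\<^sub>R a"] sublinear_scaleR[OF sub, of r c a] c by (simp add: field_simps)
    qed (use \<open>C \<noteq> {}\<close> in auto)
    then show "(INF r\<in>C. r (c *\<^sub>R a)) \<le> c * (INF r\<in>C. r a)"
      using c by (simp add: field_simps)
  qed
qed

lemma minimal_sublinear_below:
  fixes q :: "'a::real_vector \<Rightarrow> real"
  assumes q: "sublinear q"
  obtains m where "sublinear m" "m \<le> q" "\<And>r. sublinear r \<Longrightarrow> r \<le> m \<Longrightarrow> r = m"
proof -
  define A where "A = {r. sublinear r \<and> r \<le> q}"
  have po: "partial_order_on A (relation_of (\<ge>) A)"
    by (rule partial_order_on_relation_ofI) auto
  have "\<exists>u\<in>A. \<forall>r\<in>C. u \<le> r" if C: "C \<in> Chains (relation_of (\<ge>) A)" for C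
  proof (cases "C = {}")
    case True
    then show ?thesis
      using q unfolding A_def by auto
  next
    case False
    have CA: "C \<subseteq> A"
      using C by (rule Chains_relation_of)
    have bdd: "bdd_below ((\<lambda>r. r z) ` C)" for z
    proof (rule bdd_belowI2)
      fix r
      assume "r \<in> C"
      then show "- q (- z) \<le> r z"
        using CA sublinear_uminus_ge[of r z] le_funD[of r q "- z"] unfolding A_def by fastforce
    qed
    have "sublinear (\<lambda>z. INF r\<in>C. r z)"
      using False CA bdd C unfolding A_def Chains_def relation_of_def
      by (intro sublinear_INF_chain) auto
    moreover obtain r0 where "r0 \<in> C"
      using False by auto
    then have "(\<lambda>z. INF r\<in>C. r z) \<le> q"
      using CA bdd unfolding A_def le_fun_def by (fastforce intro: cINF_lower2)
    moreover have "(\<lambda>z. INF r\<in>C. r z) \<le> r" if "r \<in> C" for r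
      using bdd that by (auto simp: le_fun_def intro: cINF_lower)
    ultimately show ?thesis
      unfolding A_def by blast
  qed
  then obtain m where "m \<in> A" "\<forall>r\<in>A. r \<le> m \<longrightarrow> r = m"
    using predicate_Zorn[OF po] by blast
  then show ?thesis
    using that order_trans unfolding A_def by blast
qed

text \<open>If \<open>m\<close> is minimal, shifting it along \<open>a\<close> leaves it unchanged, which forces
  \<open>m (- a) = - m a\<close>; an odd sublinear functional is linear.\<close>

lemma minimal_sublinear_linear:
  assumes m: "sublinear m" and min: "\<And>r. sublinear r \<Longrightarrow> r \<le> m \<Longrightarrow> r = m"
  shows "linear m"
proof -
  have uminus: "m (- a) = - m a" for a
  proof -
    have "sublinear_shift m a = m"
      using min[OF sublinear_sublinear_shift[OF m]] sublinear_shift_le_self[OF m]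
      by (simp add: le_fun_def)
    then have "m (- a) \<le> - m a"
      using sublinear_shift_uminus[OF m, of a] by simp
    then show ?thesis
      using sublinear_uminus_ge[OF m, of a] by simp
  qed
  show ?thesis
  proof (rule linearI)
    fix a b
    have "m a + m b \<le> m (a + b)"
      using sublinear_add[OF m, of "- a" "- b"] uminus[of a] uminus[of b] uminus[of "a + b"] by simp
    then show "m (a + b) = m a + m b"
      using sublinear_add[OF m, of a b] by simp
  next
    fix c :: real and a
    show "m (c *\<^sub>R a) = c *\<^sub>R m a"
    proof (cases "0 \<le> c")
      case True
      then show ?thesis
        using sublinear_scaleR[OF m] by simp
    next
      case False
      then have "m ((- c) *\<^sub>R (- a)) = (- c) * m (- a)"
        by (intro sublinear_scaleR[OF m]) simp
      then show ?thesis
        using uminus[of a] by simp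
    qed
  qed
qed

lemma sublinear_linear_support:
  fixes p :: "'a::real_vector \<Rightarrow> real"
  assumes p: "sublinear p"
  obtains f where "linear f" "f \<le> p" "f y = p y"
proof -
  obtain m where m: "sublinear m" "m \<le> sublinear_shift p y"
    and min: "\<And>r. sublinear r \<Longrightarrow> r \<le> m \<Longrightarrow> r = m"
    using minimal_sublinear_below[OF sublinear_sublinear_shift[OF p]] by blast
  have lin: "linear m"
    using minimal_sublinear_linear[OF m(1) min] .
  have le: "m \<le> p"
    using m(2) sublinear_shift_le_self[OF p] by (meson le_fun_def order_trans)
  have "m (- y) \<le> - p y"
    using le_funD[OF m(2), of "- y"] sublinear_shift_uminus[OF p, of y] by simp
  then have "p y \<le> m y"
    using linear_neg[OF lin, of y] by simp
  then show ?thesis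
    using that[OF lin le] le_funD[OF le, of y] by simp
qed

definition norm_diff_quot :: "'a::real_normed_vector \<Rightarrow> 'a \<Rightarrow> real \<Rightarrow> real" where
  "norm_diff_quot x z t = (norm (x + t *\<^sub>R z) - norm x) / t"

text \<open>The right derivative of the norm, taken as an infimum since the difference quotient is
  nondecreasing in \<open>t\<close>; it is the one-sided limit by \<open>norm_diff_quot_tendsto\<close>.\<close>
definition norm_dir_deriv :: "'a::real_normed_vector \<Rightarrow> 'a \<Rightarrow> real" where
  "norm_dir_deriv x z = (INF t\<in>{0<..}. norm_diff_quot x z t)"

lemma norm_diff_quot_mono:
  assumes "0 < s" "s \<le> t"
  shows "norm_diff_quot x z s \<le> norm_diff_quot x z t"
proof -
  have eq: "x + s *\<^sub>R z = (s / t) *\<^sub>R (x + t *\<^sub>R z) + (1 - s / t) *\<^sub>R x"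
    using assms by (simp add: algebra_simps)
  have "norm (x + s *\<^sub>R z) \<le> norm ((s / t) *\<^sub>R (x + t *\<^sub>R z)) + norm ((1 - s / t) *\<^sub>R x)"
    by (subst eq) (rule norm_triangle_ineq)
  also have "\<dots> = (s / t) * norm (x + t *\<^sub>R z) + (1 - s / t) * norm x"
    using assms by simp
  finally have "norm (x + s *\<^sub>R z) - norm x \<le> s * ((norm (x + t *\<^sub>R z) - norm x) / t)"
    by (simp add: algebra_simps diff_divide_distrib)
  then show ?thesis
    using assms unfolding norm_diff_quot_def by (simp add: pos_divide_le_eq mult.commute)
qed

lemma abs_norm_diff_quot_le:
  assumes "0 < t"
  shows "\<bar>norm_diff_quot x z t\<bar> \<le> norm z"
proof -
  have "\<bar>norm (x + t *\<^sub>R z) - norm x\<bar> \<le> norm (t *\<^sub>R z)"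
    using norm_triangle_ineq3[of "x + t *\<^sub>R z" x] by simp
  also have "\<dots> = norm z * t"
    using assms by simp
  finally show ?thesis
    using assms unfolding norm_diff_quot_def by (simp add: abs_divide pos_divide_le_eq)
qed

lemma norm_dir_deriv_le:
  assumes "0 < t"
  shows "norm_dir_deriv x z \<le> norm_diff_quot x z t"
  unfolding norm_dir_deriv_def
proof (rule cINF_lower)
  show "bdd_below (norm_diff_quot x z ` {0<..})"
  proof (rule bdd_belowI2)
    fix t :: real
    assume "t \<in> {0<..}"
    then show "- norm z \<le> norm_diff_quot x z t"
      using abs_norm_diff_quot_le[of t x z] by (simp add: abs_le_iff)
  qed
qed (use assms in simp)

lemma le_norm_dir_deriv:
  "(\<And>t. 0 < t \<Longrightarrow> c \<le> norm_diff_quot x z t) \<Longrightarrow> c \<le> norm_dir_deriv x z"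
  unfolding norm_dir_deriv_def by (rule cINF_greatest) auto

lemma abs_norm_dir_deriv_le: "\<bar>norm_dir_deriv x z\<bar> \<le> norm z"
proof -
  have "norm_dir_deriv x z \<le> norm z"
    using norm_dir_deriv_le[of 1 x z] abs_norm_diff_quot_le[of 1 x z] by simp
  moreover have "- norm z \<le> norm_dir_deriv x z"
  proof (rule le_norm_dir_deriv)
    fix t :: real
    assume "0 < t"
    then show "- norm z \<le> norm_diff_quot x z t"
      using abs_norm_diff_quot_le[of t x z] by (simp add: abs_le_iff)
  qed
  ultimately show ?thesis
    by (simp add: abs_le_iff)
qed

lemma norm_diff_quot_tendsto: "(norm_diff_quot x z \<longlongrightarrow> norm_dir_deriv x z) (at_right 0)"
proof (rule tendstoI)
  fix e :: real
  assume e: "0 < e"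
  have "\<exists>t0>0. norm_diff_quot x z t0 < norm_dir_deriv x z + e"
  proof (rule ccontr)
    assume "\<not> ?thesis"
    then have "norm_dir_deriv x z + e \<le> norm_dir_deriv x z"
      by (intro le_norm_dir_deriv) (meson not_le)
    then show False
      using e by simp
  qed
  then obtain t0 where t0: "0 < t0" "norm_diff_quot x z t0 < norm_dir_deriv x z + e"
    by blast
  have "dist (norm_diff_quot x z t) (norm_dir_deriv x z) < e" if "0 < t" "t < t0" for t
    using that t0 norm_dir_deriv_le[of t x z] norm_diff_quot_mono[of t t0 x z]
    by (simp add: dist_real_def)
  then show "\<forall>\<^sub>F t in at_right 0. dist (norm_diff_quot x z t) (norm_dir_deriv x z) < e"
    unfolding eventually_at_right_field using t0(1) by blast
qed

lemma norm_diff_quot_add: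
  assumes "0 < t"
  shows "norm_diff_quot x (a + b) t \<le> norm_diff_quot x a (2 * t) + norm_diff_quot x b (2 * t)"
proof -
  have "x = (1/2) *\<^sub>R x + (1/2) *\<^sub>R x"
    using scaleR_add_left[of "1/2" "1/2" x] by simp
  then have eq: "x + t *\<^sub>R (a + b) = (1/2) *\<^sub>R (x + (2 * t) *\<^sub>R a) + (1/2) *\<^sub>R (x + (2 * t) *\<^sub>R b)"
    by (simp add: algebra_simps)
  have "norm (x + t *\<^sub>R (a + b))
      \<le> norm ((1/2) *\<^sub>R (x + (2 * t) *\<^sub>R a)) + norm ((1/2) *\<^sub>R (x + (2 * t) *\<^sub>R b))"
    by (subst eq) (rule norm_triangle_ineq)
  also have "\<dots> = (norm (x + (2 * t) *\<^sub>R a) + norm (x + (2 * t) *\<^sub>R b)) / 2"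
    by (simp only: norm_scaleR) simp
  finally have "norm (x + t *\<^sub>R (a + b)) \<le> (norm (x + (2 * t) *\<^sub>R a) + norm (x + (2 * t) *\<^sub>R b)) / 2" .
  moreover have "(A - n) / (2 * t) + (B - n) / (2 * t) = ((A + B) / 2 - n) / t" for A B n :: real
    using assms by (simp add: field_simps)
  ultimately show ?thesis
    using assms unfolding norm_diff_quot_def by (simp add: divide_right_mono)
qed

lemma sublinear_norm_dir_deriv: "sublinear (norm_dir_deriv x)"
proof (rule sublinearI)
  fix a b
  show "norm_dir_deriv x (a + b) \<le> norm_dir_deriv x a + norm_dir_deriv x b"
    unfolding norm_dir_deriv_def[of x a] norm_dir_deriv_def[of x b]
  proof (rule le_INF_add)
    fix s t :: real
    assume "s \<in> {0<..}" "t \<in> {0<..}"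
    then have m: "0 < min s t" "min s t \<le> s" "min s t \<le> t"
      by auto
    have "norm_dir_deriv x (a + b) \<le> norm_diff_quot x (a + b) (min s t / 2)"
      using m by (intro norm_dir_deriv_le) simp
    also have "\<dots> \<le> norm_diff_quot x a (min s t) + norm_diff_quot x b (min s t)"
      using norm_diff_quot_add[of "min s t / 2" x a b] m by simp
    also have "\<dots> \<le> norm_diff_quot x a s + norm_diff_quot x b t"
      using m by (intro add_mono norm_diff_quot_mono)
    finally show "norm_dir_deriv x (a + b) \<le> norm_diff_quot x a s + norm_diff_quot x b t" .
  qed auto
next
  fix c :: real and a
  assume c: "0 < c"
  have "norm_dir_deriv x (c *\<^sub>R a) / c \<le> norm_dir_deriv x a"
  proof (rule le_norm_dir_deriv)
    fix t :: real
    assume t: "0 < t"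
    have "norm_dir_deriv x (c *\<^sub>R a) \<le> norm_diff_quot x (c *\<^sub>R a) (t / c)"
      using t c by (intro norm_dir_deriv_le) simp
    also have "\<dots> = c * norm_diff_quot x a t"
      using t c unfolding norm_diff_quot_def by simp
    finally show "norm_dir_deriv x (c *\<^sub>R a) / c \<le> norm_diff_quot x a t"
      using c by (simp add: field_simps)
  qed
  then show "norm_dir_deriv x (c *\<^sub>R a) \<le> c * norm_dir_deriv x a"
    using c by (simp add: field_simps)
qed

lemma norm_dir_deriv_self: "norm_dir_deriv x x = norm x"
proof -
  have "norm_diff_quot x x t = norm x" if "0 < t" for t
  proof -
    have "x + t *\<^sub>R x = (1 + t) *\<^sub>R x"
      by (simp add: algebra_simps)
    then have "norm (x + t *\<^sub>R x) = (1 + t) * norm x"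
      using that by simp
    then show ?thesis
      using that unfolding norm_diff_quot_def by (simp add: field_simps)
  qed
  then have "norm x \<le> norm_dir_deriv x x"
    by (intro le_norm_dir_deriv) simp
  then show ?thesis
    using norm_dir_deriv_le[of 1 x x] \<open>\<And>t. 0 < t \<Longrightarrow> norm_diff_quot x x t = norm x\<close>[of 1] by simp
qed

lemma norm_dir_deriv_uminus_self: "norm_dir_deriv x (- x) = - norm x"
proof -
  have "x + (1/2) *\<^sub>R (- x) = (1/2) *\<^sub>R x"
    using scaleR_diff_left[of 1 "1/2" x] by simp
  then have "norm_diff_quot x (- x) (1/2) = - norm x"
    unfolding norm_diff_quot_def by simp
  then show ?thesis
    using norm_dir_deriv_le[of "1/2" x "- x"] abs_norm_dir_deriv_le[of x "- x"] by simp
qed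

lemma supp_funcs_le_norm_dir_deriv:
  assumes "F \<in> supp_funcs x"
  shows "blinfun_apply F z \<le> norm_dir_deriv x z"
proof (rule le_norm_dir_deriv)
  fix t :: real
  assume t: "0 < t"
  have "norm x + t * blinfun_apply F z = blinfun_apply F (x + t *\<^sub>R z)"
    using assms unfolding supp_funcs_def by (simp add: blinfun.add_right blinfun.scaleR_right)
  also have "\<dots> \<le> norm (x + t *\<^sub>R z)"
    using norm_blinfun[of F "x + t *\<^sub>R z"] assms unfolding supp_funcs_def by simp
  finally show "blinfun_apply F z \<le> norm_diff_quot x z t"
    using t unfolding norm_diff_quot_def by (simp add: pos_le_divide_eq mult.commute)
qed

lemma linear_le_norm_dir_deriv_in_supp_funcs:
  fixes x :: "'a::real_normed_vector"
  assumes x: "x \<noteq> 0" and f: "linear f" "f \<le> norm_dir_deriv x"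
  shows "Blinfun f \<in> supp_funcs x" "blinfun_apply (Blinfun f) = f"
proof -
  have "f z \<le> norm z" for z
    using le_funD[OF f(2), of z] abs_norm_dir_deriv_le[of x z] by simp
  then have abs_le: "\<bar>f z\<bar> \<le> norm z" for z
    using linear_neg[OF f(1), of z] by (metis abs_le_iff minus_le_iff norm_minus_cancel)
  have "bounded_linear f"
    using f(1) abs_le by (intro bounded_linear_intro[where K = 1]) (auto simp: linear_add linear_scale)
  then show apply_eq: "blinfun_apply (Blinfun f) = f"
    by (rule bounded_linear_Blinfun_apply)
  have "f x \<le> norm x" "- f x \<le> - norm x"
    using le_funD[OF f(2), of x] le_funD[OF f(2), of "- x"] linear_neg[OF f(1), of x]
    by (simp_all add: norm_dir_deriv_self norm_dir_deriv_uminus_self)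
  then have fx: "f x = norm x"
    by simp
  have "norm (Blinfun f) \<le> 1"
    using abs_le by (intro norm_blinfun_bound) (simp_all add: apply_eq)
  moreover have "norm x \<le> norm (Blinfun f) * norm x"
    using norm_blinfun[of "Blinfun f" x] by (simp add: apply_eq fx)
  ultimately show "Blinfun f \<in> supp_funcs x"
    using x fx unfolding supp_funcs_def by (simp add: apply_eq)
qed

lemma norm_dir_deriv_supp_funcs_witness:
  assumes "x \<noteq> 0"
  obtains F where "F \<in> supp_funcs x" "blinfun_apply F y = norm_dir_deriv x y"
proof -
  obtain f where f: "linear f" "f \<le> norm_dir_deriv x" "f y = norm_dir_deriv x y"
    using sublinear_linear_support[OF sublinear_norm_dir_deriv] by blast
  then show ?thesis
    using that linear_le_norm_dir_deriv_in_supp_funcs[OF assms f(1,2)] by simp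
qed

lemma norm_sq_diff_quot_tendsto:
  fixes x y :: "'a::real_normed_vector"
  shows "((\<lambda>t. (norm (x + t *\<^sub>R y) ^ 2 - norm x ^ 2) / (2 * t)) \<longlongrightarrow> norm x * norm_dir_deriv x y)
    (at_right 0)"
proof (rule Lim_transform_eventually)
  have "((\<lambda>t. norm_diff_quot x y t * ((norm (x + t *\<^sub>R y) + norm x) / 2))
      \<longlongrightarrow> norm_dir_deriv x y * ((norm (x + 0 *\<^sub>R y) + norm x) / 2)) (at_right 0)"
    by (intro tendsto_intros norm_diff_quot_tendsto) simp
  then show "((\<lambda>t. norm_diff_quot x y t * ((norm (x + t *\<^sub>R y) + norm x) / 2))
      \<longlongrightarrow> norm x * norm_dir_deriv x y) (at_right 0)"
    by (simp add: mult.commute)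
  show "\<forall>\<^sub>F t in at_right 0. norm_diff_quot x y t * ((norm (x + t *\<^sub>R y) + norm x) / 2)
      = (norm (x + t *\<^sub>R y) ^ 2 - norm x ^ 2) / (2 * t)"
    unfolding eventually_at_right_field norm_diff_quot_def
    by (intro exI[of _ 1]) (auto simp: field_simps power2_eq_square)
qed

lemma rho_plus_eq: "rho_plus x y = norm x * norm_dir_deriv x y"
  unfolding rho_plus_def by (rule tendsto_Lim) (simp_all add: norm_sq_diff_quot_tendsto)

lemma rho_minus_eq: "rho_minus x y = - (norm x * norm_dir_deriv x (- y))"
  unfolding rho_minus_def
proof (rule tendsto_Lim)
  have "((\<lambda>t. - ((norm (x + t *\<^sub>R - y) ^ 2 - norm x ^ 2) / (2 * t))) \<longlongrightarrow> - (norm x * norm_dir_deriv x (- y)))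
      (at_right 0)"
    by (intro tendsto_minus norm_sq_diff_quot_tendsto)
  then show "((\<lambda>t. (norm (x + t *\<^sub>R y) ^ 2 - norm x ^ 2) / (2 * t)) \<longlongrightarrow> - (norm x * norm_dir_deriv x (- y)))
      (at_left 0)"
    by (simp add: filterlim_at_left_to_right[of _ _ 0])
qed simp

lemma sphere_nonempty_of_nonzero:
  fixes x :: "'a::real_normed_vector"
  assumes "x \<noteq> 0"
  shows "sphere (0::'a) 1 \<noteq> {}"
proof -
  have "(1 / norm x) *\<^sub>R x \<in> sphere 0 1"
    using assms by simp
  then show ?thesis
    by blast
qed

lemma norm_dir_deriv_gap_nonneg: "0 \<le> norm_dir_deriv x y + norm_dir_deriv x (- y)"
  using sublinear_uminus_ge[OF sublinear_norm_dir_deriv, of x y] by simp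

lemma norm_dir_deriv_gap_le: "norm_dir_deriv x y + norm_dir_deriv x (- y) \<le> 2 * norm y"
  using abs_norm_dir_deriv_le[of x y] abs_norm_dir_deriv_le[of x "- y"] by simp

lemma bdd_above_norm_dir_deriv_gap_sphere:
  "bdd_above ((\<lambda>y. norm_dir_deriv x y + norm_dir_deriv x (- y)) ` sphere 0 1)"
proof (rule bdd_aboveI2)
  fix y :: 'a
  assume "y \<in> sphere 0 1"
  then show "norm_dir_deriv x y + norm_dir_deriv x (- y) \<le> 2"
    using norm_dir_deriv_gap_le[of x y] by simp
qed

lemma norm_blinfun_le_of_sphere:
  fixes h :: "'a::real_normed_vector \<Rightarrow>\<^sub>L real"
  assumes "0 \<le> c" and le: "\<And>y. norm y = 1 \<Longrightarrow> blinfun_apply h y \<le> c"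
  shows "norm h \<le> c"
proof (rule norm_blinfun_bound[OF assms(1)])
  fix z
  show "norm (blinfun_apply h z) \<le> c * norm z"
  proof (cases "z = 0")
    case False
    define y where "y = (1 / norm z) *\<^sub>R z"
    have "norm y = 1" "norm (- y) = 1"
      using False by (simp_all add: y_def)
    then have "\<bar>blinfun_apply h y\<bar> \<le> c"
      using le[of y] le[of "- y"] by (simp add: blinfun.minus_right abs_le_iff)
    moreover have "blinfun_apply h z = norm z * blinfun_apply h y"
      using False by (simp add: y_def blinfun.scaleR_right)
    ultimately show ?thesis
      by (simp add: abs_mult) (metis mult.commute mult_right_mono norm_ge_zero)
  qed simp
qed

lemma diameter_supp_funcs:
  fixes x :: "'a::real_normed_vector"
  assumes x: "x \<noteq> 0"
  shows "diameter (supp_funcs x) = (SUP y\<in>sphere 0 1. norm_dir_deriv x y + norm_dir_deriv x (- y))"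
    (is "_ = ?S")
proof (rule antisym)
  have sphere_ne: "sphere (0::'a) 1 \<noteq> {}"
    using sphere_nonempty_of_nonzero[OF x] .
  note bdd = bdd_above_norm_dir_deriv_gap_sphere[of x]
  obtain F0 where "F0 \<in> supp_funcs x"
    using norm_dir_deriv_supp_funcs_witness[OF x] by metis
  then have J_ne: "supp_funcs x \<noteq> {}"
    by blast
  have "dist F G \<le> ?S" if "F \<in> supp_funcs x" "G \<in> supp_funcs x" for F G
  proof -
    obtain y0 where "y0 \<in> sphere (0::'a) 1"
      using sphere_ne by blast
    have "0 \<le> ?S"
      using norm_dir_deriv_gap_nonneg cSUP_upper2[OF bdd \<open>y0 \<in> sphere 0 1\<close>] by blast
    moreover have "blinfun_apply (F - G) y \<le> ?S" if "norm y = 1" for y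
    proof -
      have "blinfun_apply (F - G) y \<le> norm_dir_deriv x y + norm_dir_deriv x (- y)"
        using supp_funcs_le_norm_dir_deriv[OF \<open>F \<in> supp_funcs x\<close>, of y]
          supp_funcs_le_norm_dir_deriv[OF \<open>G \<in> supp_funcs x\<close>, of "- y"]
        by (simp add: blinfun.diff_left blinfun.minus_right)
      also have "\<dots> \<le> ?S"
        using that by (intro cSUP_upper[OF _ bdd]) simp
      finally show ?thesis .
    qed
    ultimately show ?thesis
      by (simp add: dist_norm norm_blinfun_le_of_sphere)
  qed
  then show "diameter (supp_funcs x) \<le> ?S"
    unfolding diameter_def using J_ne by (auto intro!: cSUP_least)
next
  have bounded: "bounded (supp_funcs x)"
    unfolding bounded_iff supp_funcs_def by auto
  show "?S \<le> diameter (supp_funcs x)"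
  proof (rule cSUP_least)
    show "sphere (0::'a) 1 \<noteq> {}"
      using sphere_nonempty_of_nonzero[OF x] .
  next
    fix y :: 'a
    assume "y \<in> sphere 0 1"
    obtain F where F: "F \<in> supp_funcs x" "blinfun_apply F y = norm_dir_deriv x y"
      using norm_dir_deriv_supp_funcs_witness[OF x] by metis
    obtain G where G: "G \<in> supp_funcs x" "blinfun_apply G (- y) = norm_dir_deriv x (- y)"
      using norm_dir_deriv_supp_funcs_witness[OF x] by metis
    have "norm_dir_deriv x y + norm_dir_deriv x (- y) = blinfun_apply (F - G) y"
      using F(2) G(2) by (simp add: blinfun.diff_left blinfun.minus_right)
    also have "\<dots> \<le> norm (F - G) * norm y"
      using norm_blinfun[of "F - G" y] by simp
    also have "\<dots> = dist F G"
      using \<open>y \<in> sphere 0 1\<close> by (simp add: dist_norm)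
    also have "\<dots> \<le> diameter (supp_funcs x)"
      using bounded F(1) G(1) by (rule diameter_bounded_bound)
    finally show "norm_dir_deriv x y + norm_dir_deriv x (- y) \<le> diameter (supp_funcs x)" .
  qed
qed

theorem lemma2p2:
  fixes x :: "'a::real_normed_vector" and \<epsilon> :: real
  assumes "x \<noteq> 0" and "0 \<le> \<epsilon>" and "\<epsilon> < 2"
  shows "eps_smooth \<epsilon> x \<longleftrightarrow>
         (SUP y\<in>sphere 0 1. rho_plus x y - rho_minus x y) \<le> \<epsilon> * norm x"
proof -
  let ?gap = "\<lambda>y. norm_dir_deriv x y + norm_dir_deriv x (- y)"
  have gap: "rho_plus x y - rho_minus x y = norm x * ?gap y" for y
    by (simp add: rho_plus_eq rho_minus_eq algebra_simps)
  have nx: "0 < norm x"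
    using assms(1) by simp
  have sphere_ne: "sphere (0::'a) 1 \<noteq> {}"
    using sphere_nonempty_of_nonzero[OF assms(1)] .
  have bdd: "bdd_above (?gap ` sphere 0 1)"
    by (rule bdd_above_norm_dir_deriv_gap_sphere)
  then obtain M where "\<forall>y\<in>sphere 0 1. ?gap y \<le> M"
    by (auto simp: bdd_above_def)
  then have "bdd_above ((\<lambda>y. norm x * ?gap y) ` sphere 0 1)"
    using nx by (intro bdd_aboveI2[where M = "norm x * M"]) (simp add: mult_left_mono)
  then have "(SUP y\<in>sphere 0 1. rho_plus x y - rho_minus x y) \<le> \<epsilon> * norm x
      \<longleftrightarrow> (\<forall>y\<in>sphere 0 1. ?gap y \<le> \<epsilon>)"
    using nx by (simp add: gap cSUP_le_iff[OF sphere_ne] mult.commute)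
  also have "\<dots> \<longleftrightarrow> diameter (supp_funcs x) \<le> \<epsilon>"
    using bdd by (simp add: diameter_supp_funcs[OF assms(1)] cSUP_le_iff[OF sphere_ne])
  finally show ?thesis
    unfolding eps_smooth_def ..
qed

end
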